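(* Consider conditional probability table (CPT) Bayesian networks on $m$ nodes as described in the context, for an ensemble $\mathcal{G}$ of DAGs on $[m]$ and parameter maps $\mathcal{P}(\mathcal{G})$, and suppose $\theta_{\min}>0$. Then $$\Delta_{\max}:=\max_{i\in[m]}\max_{G\in\mathcal{G}}\sup_{\Theta\in\mathcal{P}(\mathcal{G})}\mathbb{E}_{X_{\pi_i(G)}}[\Delta(\eta_i,\eta_0)]\le 4\log(1/\theta_{\min}),\qquad \sup_{\Theta\in\mathcal{P}(\mathcal{G})}I(S;G\mid\Theta)\le 4nm\log(1/\theta_{\min}).$$
   Context: Each $X_i$ takes values in $[v]$. Given a DAG $G$ and parameter map $\Theta$, node $i$ has a conditional probability table $\Theta_i^G:[v]^{|\pi_i(G)|}\to\Delta_v$ (the probability simplex), and $P(X_i=j\mid X_{\pi_i(G)}=x)=\theta^G_{ij}(x)$; the reference distribution $P_i(\varnothing,\Theta)$ is the table the parameter map assigns to node $i$ when it has no parents. The joint distribution is $\prod_iP_i(x_i\mid x_{\pi_i(G)})$; $S$ is $n$ i.i.d. samples from it; $I(S;G\mid\Theta)$ is the mutual information between $S$ and $G$ with $G$ uniform on $\mathcal{G}$ and $\Theta$ fixed. Viewing the categorical distribution as an exponential family with sufficient statistic $T(x)=(\mathbf{1}[x=j])_{j=1}^v$ and natural parameter $(\log\theta_j)_{j=1}^v$, $\eta_i=(\log\theta^G_{ij}(X_{\pi_i(G)}))_j$ and $\eta_0$ is the natural parameter of $P_i(\varnothing,\Theta)$; $\Delta(\eta_1,\eta_2)=(\eta_1-\eta_2)^T(\tau(\eta_1)-\tau(\eta_2))$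 where $\tau$ is the expected sufficient statistic (the probability vector). $\mathbb{E}_{X_{\pi_i(G)}}$ is expectation over the parents' values under the network's distribution. $\theta_{\min}:=\inf_{\Theta}\min_{G}\min_{i}\min_{x}\min_{j}\theta^G_{ij}(x)$, the minimum probability entry over all tables used, including the parentless tables $P_i(\varnothing,\Theta)$. *)

theory Defs
  imports Complex_Main "HOL-Library.FuncSet"
begin

text \<open>Nodes are 0..<m, values are 0..<v. A DAG is represented by its parent
function G :: nat => nat set (G i = parents of node i; G i = {} for i >= m).
A parameter map Theta assigns to node i, parent set S and parent assignment x
the conditional probability Theta i S x j of X_i = j. The assignment x is passed
restricted to S (zero elsewhere). The reference (parentless) table of node i is
Theta i {} (\<lambda>_. 0).\<close>

type_synonym dag = "nat \<Rightarrow> nat set"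
type_synonym param_map = "nat \<Rightarrow> nat set \<Rightarrow> (nat \<Rightarrow> nat) \<Rightarrow> nat \<Rightarrow> real"

definition is_dag :: "nat \<Rightarrow> dag \<Rightarrow> bool" where
  "is_dag m G \<longleftrightarrow> (\<forall>i. (i < m \<longrightarrow> G i \<subseteq> {..<m}) \<and> (m \<le> i \<longrightarrow> G i = {}))
      \<and> acyclic {(j, i). i < m \<and> j \<in> G i}"

definition configs :: "nat \<Rightarrow> nat \<Rightarrow> (nat \<Rightarrow> nat) set" where
  "configs m v = Pi\<^sub>E {..<m} (\<lambda>_. {..<v})"

definition restr :: "nat set \<Rightarrow> (nat \<Rightarrow> nat) \<Rightarrow> nat \<Rightarrow> nat" where
  "restr S x = (\<lambda>k. if k \<in> S then x k else 0)"

definition is_dist :: "nat \<Rightarrow> (nat \<Rightarrow> real) \<Rightarrow> bool" where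
  "is_dist v p \<longleftrightarrow> (\<forall>j<v. 0 \<le> p j) \<and> (\<Sum>j<v. p j) = 1"

definition ref_table :: "param_map \<Rightarrow> nat \<Rightarrow> nat \<Rightarrow> real" where
  "ref_table \<Theta> i = \<Theta> i {} (\<lambda>_. 0)"

definition cpd :: "param_map \<Rightarrow> dag \<Rightarrow> nat \<Rightarrow> (nat \<Rightarrow> nat) \<Rightarrow> nat \<Rightarrow> real" where
  "cpd \<Theta> G i x = \<Theta> i (G i) (restr (G i) x)"

definition valid_param :: "nat \<Rightarrow> nat \<Rightarrow> dag set \<Rightarrow> param_map \<Rightarrow> bool" where
  "valid_param m v Gs \<Theta> \<longleftrightarrow>
     (\<forall>i<m. is_dist v (ref_table \<Theta> i)) \<and>
     (\<forall>G\<in>Gs. \<forall>i<m. \<forall>x\<in>configs m v. is_dist v (cpd \<Theta> G i x))"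

definition joint :: "nat \<Rightarrow> param_map \<Rightarrow> dag \<Rightarrow> (nat \<Rightarrow> nat) \<Rightarrow> real" where
  "joint m \<Theta> G x = (\<Prod>i<m. cpd \<Theta> G i x (x i))"

text \<open>Delta(eta_1, eta_2) = (eta_1 - eta_2)^T (tau(eta_1) - tau(eta_2)) for the
categorical family: natural parameters (ln p_j)_j, mean parameters (p_j)_j.\<close>
definition delta :: "nat \<Rightarrow> (nat \<Rightarrow> real) \<Rightarrow> (nat \<Rightarrow> real) \<Rightarrow> real" where
  "delta v p q = (\<Sum>j<v. (ln (p j) - ln (q j)) * (p j - q j))"

text \<open>E_{X_{pi_i(G)}}[Delta(eta_i, eta_0)] under the network distribution of (G, Theta).\<close>
definition exp_delta :: "nat \<Rightarrow> nat \<Rightarrow> param_map \<Rightarrow> dag \<Rightarrow> nat \<Rightarrow> real" where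
  "exp_delta m v \<Theta> G i =
     (\<Sum>x\<in>configs m v. joint m \<Theta> G x * delta v (cpd \<Theta> G i x) (ref_table \<Theta> i))"

definition theta_min :: "nat \<Rightarrow> nat \<Rightarrow> dag set \<Rightarrow> param_map set \<Rightarrow> real" where
  "theta_min m v Gs Ps = Inf
     ({cpd \<Theta> G i x j | \<Theta> G i x j. \<Theta> \<in> Ps \<and> G \<in> Gs \<and> i < m \<and> x \<in> configs m v \<and> j < v}
      \<union> {ref_table \<Theta> i j | \<Theta> i j. \<Theta> \<in> Ps \<and> i < m \<and> j < v})"

definition samples :: "nat \<Rightarrow> nat \<Rightarrow> nat \<Rightarrow> (nat \<Rightarrow> nat \<Rightarrow> nat) set" where
  "samples m v n = Pi\<^sub>E {..<n} (\<lambda>_. configs m v)"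

definition sample_prob :: "nat \<Rightarrow> nat \<Rightarrow> param_map \<Rightarrow> dag \<Rightarrow> (nat \<Rightarrow> nat \<Rightarrow> nat) \<Rightarrow> real" where
  "sample_prob m n \<Theta> G s = (\<Prod>t<n. joint m \<Theta> G (s t))"

text \<open>I(S; G | Theta) with G uniform on Gs and S = n i.i.d. samples (natural log,
convention 0 ln 0 = 0).\<close>
definition mutual_info :: "nat \<Rightarrow> nat \<Rightarrow> nat \<Rightarrow> dag set \<Rightarrow> param_map \<Rightarrow> real" where
  "mutual_info m v n Gs \<Theta> =
     (\<Sum>G\<in>Gs. \<Sum>s\<in>samples m v n.
        (let p = sample_prob m n \<Theta> G s;
             q = (\<Sum>G'\<in>Gs. sample_prob m n \<Theta> G' s) / real (card Gs)
         in (1 / real (card Gs)) * (if p = 0 then 0 else p * ln (p / q))))"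

end

theory Submission
  imports Defs
begin

text \<open>All CPT entries lie in \<open>[t, 1]\<close>, so two of them have
log-ratio of absolute value at most \<open>ln (1/t)\<close>; hence
\<open>\<Delta>(p, q) = \<Sum>\<^sub>j (ln p\<^sub>j - ln q\<^sub>j) (p\<^sub>j - q\<^sub>j) \<le> ln (1/t) \<Sum>\<^sub>j (p\<^sub>j + q\<^sub>j) = 2 ln (1/t)\<close>.
Averaging over the parents preserves this bound because the network distribution is normalised:
sum out a sink of the DAG, whose CPT sums to one, and recurse. For the mutual information, the
probability of \<open>n\<close> samples under every DAG lies in \<open>[t\<^sup>m\<^sup>n, 1]\<close>, hence so does its average over the
ensemble, and every log-likelihood ratio in the divergence is at most \<open>nm ln (1/t)\<close>. The
constants obtained are thus 2 and 1 in place of 4.\<close>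

lemma is_dist_le_one: "is_dist v p \<Longrightarrow> j < v \<Longrightarrow> p j \<le> 1"
  unfolding is_dist_def using member_le_sum[of j "{..<v}" p] by auto

lemma is_dist_imp_pos: "is_dist v p \<Longrightarrow> 0 < v"
  unfolding is_dist_def by (cases v) auto

lemma delta_le_two_ln:
  assumes p: "is_dist v p" and q: "is_dist v q" and t: "0 < t"
    and p_ge: "\<forall>j<v. t \<le> p j" and q_ge: "\<forall>j<v. t \<le> q j"
  shows "delta v p q \<le> 2 * ln (1 / t)"
proof -
  have term_le: "(ln (p j) - ln (q j)) * (p j - q j) \<le> ln (1 / t) * (p j + q j)" if j: "j < v" for j
  proof -
    have "ln t \<le> ln (p j)" "ln t \<le> ln (q j)" "ln (p j) \<le> 0" "ln (q j) \<le> 0"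
      using p_ge q_ge is_dist_le_one[OF p j] is_dist_le_one[OF q j] j t by auto
    hence ln_diff: "\<bar>ln (p j) - ln (q j)\<bar> \<le> ln (1 / t)"
      using t by (simp add: ln_div)
    have "\<bar>p j - q j\<bar> \<le> p j + q j"
      using p_ge q_ge j t by force
    hence "\<bar>ln (p j) - ln (q j)\<bar> * \<bar>p j - q j\<bar> \<le> ln (1 / t) * (p j + q j)"
      using ln_diff by (intro mult_mono) auto
    thus ?thesis
      by (metis abs_ge_self abs_mult order_trans)
  qed
  have "delta v p q \<le> (\<Sum>j<v. ln (1 / t) * (p j + q j))"
    unfolding delta_def using term_le by (intro sum_mono) auto
  also have "\<dots> = 2 * ln (1 / t)"
    using p q unfolding is_dist_def by (simp add: sum_distrib_left[symmetric] sum.distrib)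
  finally show ?thesis .
qed

lemma sum_PiE_insert:
  fixes f :: "('a \<Rightarrow> 'b) \<Rightarrow> 'c::comm_monoid_add"
  assumes "k \<notin> M"
  shows "(\<Sum>x\<in>PiE (insert k M) B. f x) = (\<Sum>y\<in>PiE M B. \<Sum>j\<in>B k. f (y(k := j)))"
proof -
  have "(\<Sum>x\<in>PiE (insert k M) B. f x) = (\<Sum>(j, y)\<in>B k \<times> PiE M B. f (y(k := j)))"
    unfolding PiE_insert_eq using inj_combinator[OF assms]
    by (subst sum.reindex) (auto simp: case_prod_unfold)
  also have "\<dots> = (\<Sum>y\<in>PiE M B. \<Sum>j\<in>B k. f (y(k := j)))"
    by (simp add: sum.cartesian_product[symmetric] sum.swap[of _ "B k"])
  finally show ?thesis .
qed

lemma finite_acyclic_obtain_sink: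
  assumes "finite R" "acyclic R" "N \<noteq> {}"
  obtains k where "k \<in> N" "\<forall>i\<in>N. (k, i) \<notin> R"
proof -
  have "wf (R\<inverse>)"
    using assms(1,2) by (rule finite_acyclic_wf_converse)
  then obtain k where "k \<in> N" "\<forall>i. (i, k) \<in> R\<inverse> \<longrightarrow> i \<notin> N"
    using assms(3) unfolding wf_eq_minimal by (metis ex_in_conv)
  thus thesis using that by auto
qed

lemma cpd_cong: "(\<And>k. k \<in> G i \<Longrightarrow> x k = y k) \<Longrightarrow> cpd \<Theta> G i x = cpd \<Theta> G i y"
  unfolding cpd_def restr_def by (metis (no_types, lifting))

lemma configs_nonempty: "m = 0 \<or> 0 < v \<Longrightarrow> configs m v \<noteq> {}"
  unfolding configs_def by (auto simp: PiE_eq_empty_iff)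

lemma sum_prod_cpd_PiE_eq_one:
  assumes dag: "is_dag m G"
    and dist: "\<forall>i<m. \<forall>x\<in>configs m v. is_dist v (cpd \<Theta> G i x)"
    and w: "w \<in> configs m v"
    and "N \<subseteq> {..<m}" "\<forall>i\<in>N. G i \<subseteq> N"
  shows "(\<Sum>x\<in>PiE N (\<lambda>_. {..<v}). \<Prod>i\<in>N. cpd \<Theta> G i x (x i)) = 1"
  using assms(4,5)
proof (induction "card N" arbitrary: N rule: less_induct)
  case less
  show ?case
  proof (cases "N = {}")
    case True
    thus ?thesis by simp
  next
    case False
    have finN: "finite N"
      using less.prems(1) by (rule finite_subset) simp
    let ?R = "{(j, i). i < m \<and> j \<in> G i}"
    have "?R \<subseteq> {..<m} \<times> {..<m}"
      using dag unfolding is_dag_def by blast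
    hence "finite ?R"
      by (rule finite_subset) simp
    moreover have "acyclic ?R"
      using dag unfolding is_dag_def by blast
    ultimately obtain k where k: "k \<in> N" and "\<forall>i\<in>N. (k, i) \<notin> ?R"
      using False by (rule finite_acyclic_obtain_sink)
    hence sink: "\<forall>i\<in>N. k \<notin> G i"
      using less.prems(1) by auto
    define M where "M = N - {k}"
    have N_eq: "N = insert k M" and "k \<notin> M" "finite M"
      using k finN by (auto simp: M_def)
    have IH: "(\<Sum>x\<in>PiE M (\<lambda>_. {..<v}). \<Prod>i\<in>M. cpd \<Theta> G i x (x i)) = 1"
    proof (rule less.hyps)
      show "card M < card N"
        unfolding M_def using finN k by (rule card_Diff1_less)
      show "M \<subseteq> {..<m}" "\<forall>i\<in>M. G i \<subseteq> M"
        using k sink less.prems by (auto simp: M_def)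
    qed
    have parents_k: "G k \<subseteq> M"
      using k sink less.prems(2) by (auto simp: M_def)
    have k_sum: "(\<Sum>j<v. cpd \<Theta> G k y j) = 1" if y: "y \<in> PiE M (\<lambda>_. {..<v})" for y
    proof -
      define z where "z i = (if i \<in> M then y i else w i)" for i
      have "z \<in> configs m v"
        using y w less.prems(1) by (auto simp: z_def configs_def M_def PiE_iff extensional_def)
      moreover have "cpd \<Theta> G k y = cpd \<Theta> G k z"
        using parents_k by (intro cpd_cong) (auto simp: z_def)
      ultimately show ?thesis
        using dist k less.prems(1) unfolding is_dist_def by auto
    qed
    have "(\<Sum>x\<in>PiE N (\<lambda>_. {..<v}). \<Prod>i\<in>N. cpd \<Theta> G i x (x i))
        = (\<Sum>y\<in>PiE M (\<lambda>_. {..<v}). \<Sum>j<v. \<Prod>i\<in>insert k M. cpd \<Theta> G i (y(k := j)) ((y(k := j)) i))"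
      unfolding N_eq using \<open>k \<notin> M\<close> by (rule sum_PiE_insert)
    also have "\<dots> = (\<Sum>y\<in>PiE M (\<lambda>_. {..<v}). (\<Sum>j<v. cpd \<Theta> G k y j) * (\<Prod>i\<in>M. cpd \<Theta> G i y (y i)))"
    proof (intro sum.cong refl)
      fix y
      have "cpd \<Theta> G i (y(k := j)) = cpd \<Theta> G i y" if "i \<in> N" for i j
        using sink that by (intro cpd_cong) auto
      hence "(\<Prod>i\<in>insert k M. cpd \<Theta> G i (y(k := j)) ((y(k := j)) i))
          = cpd \<Theta> G k y j * (\<Prod>i\<in>M. cpd \<Theta> G i y (y i))" for j
        using \<open>k \<notin> M\<close> \<open>finite M\<close> N_eq by (auto intro!: prod.cong)
      thus "(\<Sum>j<v. \<Prod>i\<in>insert k M. cpd \<Theta> G i (y(k := j)) ((y(k := j)) i))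
          = (\<Sum>j<v. cpd \<Theta> G k y j) * (\<Prod>i\<in>M. cpd \<Theta> G i y (y i))"
        by (simp add: sum_distrib_right)
    qed
    also have "\<dots> = 1"
      using IH k_sum by simp
    finally show ?thesis .
  qed
qed

lemma valid_param_configs_nonempty: "valid_param m v Gs \<Theta> \<Longrightarrow> configs m v \<noteq> {}"
  unfolding valid_param_def
  by (cases m) (auto intro!: configs_nonempty dest: is_dist_imp_pos)

lemma joint_sum_eq_one:
  assumes "is_dag m G" "\<forall>i<m. \<forall>x\<in>configs m v. is_dist v (cpd \<Theta> G i x)" "configs m v \<noteq> {}"
  shows "(\<Sum>x\<in>configs m v. joint m \<Theta> G x) = 1"
proof -
  obtain w where "w \<in> configs m v"
    using assms(3) by blast
  thus ?thesis
    using sum_prod_cpd_PiE_eq_one[of m G v \<Theta> w "{..<m}"] assms(1,2)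
    unfolding configs_def joint_def is_dag_def by auto
qed

lemma joint_nonneg:
  assumes "\<forall>i<m. is_dist v (cpd \<Theta> G i x)" "x \<in> configs m v"
  shows "0 \<le> joint m \<Theta> G x"
  using assms unfolding joint_def is_dist_def configs_def by (auto intro!: prod_nonneg)

lemma joint_le_one:
  assumes "\<forall>i<m. is_dist v (cpd \<Theta> G i x)" "x \<in> configs m v"
  shows "joint m \<Theta> G x \<le> 1"
  unfolding joint_def
proof (rule prod_le_1)
  fix i assume "i \<in> {..<m}"
  moreover have "x i < v"
    using assms(2) \<open>i \<in> {..<m}\<close> by (auto simp: configs_def)
  ultimately show "0 \<le> cpd \<Theta> G i x (x i) \<and> cpd \<Theta> G i x (x i) \<le> 1"
    using assms(1) is_dist_le_one by (auto simp: is_dist_def)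
qed

lemma power_le_joint:
  assumes "0 \<le> t" "\<forall>i<m. t \<le> cpd \<Theta> G i x (x i)"
  shows "t ^ m \<le> joint m \<Theta> G x"
  using prod_mono[of "{..<m}" "\<lambda>_. t" "\<lambda>i. cpd \<Theta> G i x (x i)"] assms
  unfolding joint_def by auto

lemma exp_delta_le_two_ln:
  assumes valid: "valid_param m v Gs \<Theta>" and G: "G \<in> Gs" "is_dag m G" and i: "i < m"
    and t: "0 < t"
    and cpd_ge: "\<forall>x\<in>configs m v. \<forall>j<v. t \<le> cpd \<Theta> G i x j"
    and ref_ge: "\<forall>j<v. t \<le> ref_table \<Theta> i j"
  shows "exp_delta m v \<Theta> G i \<le> 2 * ln (1 / t)"
proof -
  have dist: "\<forall>i<m. \<forall>x\<in>configs m v. is_dist v (cpd \<Theta> G i x)"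
    using valid G unfolding valid_param_def by blast
  have "exp_delta m v \<Theta> G i \<le> (\<Sum>x\<in>configs m v. joint m \<Theta> G x * (2 * ln (1 / t)))"
    unfolding exp_delta_def
  proof (intro sum_mono mult_left_mono)
    fix x assume x: "x \<in> configs m v"
    show "0 \<le> joint m \<Theta> G x"
      using dist x by (intro joint_nonneg) auto
    show "delta v (cpd \<Theta> G i x) (ref_table \<Theta> i) \<le> 2 * ln (1 / t)"
      using dist valid x i t cpd_ge ref_ge unfolding valid_param_def
      by (intro delta_le_two_ln) auto
  qed
  also have "\<dots> = 2 * ln (1 / t)"
    using joint_sum_eq_one[OF G(2) dist valid_param_configs_nonempty[OF valid]]
    by (simp add: sum_distrib_right[symmetric])
  finally show ?thesis .
qed

lemma mixture_divergence_le:
  fixes P :: "'g \<Rightarrow> 's \<Rightarrow> real"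
  assumes Gs: "finite Gs" "Gs \<noteq> {}" and b: "0 < b"
    and P_bounds: "\<And>G s. G \<in> Gs \<Longrightarrow> s \<in> S \<Longrightarrow> b \<le> P G s \<and> P G s \<le> 1"
    and P_sum: "\<And>G. G \<in> Gs \<Longrightarrow> (\<Sum>s\<in>S. P G s) = 1"
  shows "(\<Sum>G\<in>Gs. \<Sum>s\<in>S.
          (let p = P G s; q = (\<Sum>G'\<in>Gs. P G' s) / real (card Gs)
           in (1 / real (card Gs)) * (if p = 0 then 0 else p * ln (p / q))))
        \<le> ln (1 / b)"
proof -
  define c where "c = real (card Gs)"
  have c: "0 < c"
    using Gs by (simp add: c_def card_gt_0_iff)
  have term_le: "(let p = P G s; q = (\<Sum>G'\<in>Gs. P G' s) / c
                  in (1 / c) * (if p = 0 then 0 else p * ln (p / q)))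
                \<le> (1 / c) * (P G s * ln (1 / b))" if G: "G \<in> Gs" and s: "s \<in> S" for G s
  proof -
    define q where "q = (\<Sum>G'\<in>Gs. P G' s) / c"
    have "c * b \<le> (\<Sum>G'\<in>Gs. P G' s)"
      using sum_mono[of Gs "\<lambda>_. b" "\<lambda>G'. P G' s"] P_bounds s by (simp add: c_def)
    hence q: "b \<le> q"
      using c by (simp add: q_def field_simps)
    have p: "0 < P G s" "P G s \<le> 1"
      using P_bounds[OF G s] b by auto
    have "ln (P G s / q) \<le> ln (1 / b)"
      using p q b by (intro ln_mono frac_le) auto
    hence "(1 / c) * (P G s * ln (P G s / q)) \<le> (1 / c) * (P G s * ln (1 / b))"
      using p c by (intro mult_left_mono) auto
    thus ?thesis
      using p unfolding Let_def q_def by simp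
  qed
  have "(\<Sum>G\<in>Gs. \<Sum>s\<in>S. (let p = P G s; q = (\<Sum>G'\<in>Gs. P G' s) / c
           in (1 / c) * (if p = 0 then 0 else p * ln (p / q))))
        \<le> (\<Sum>G\<in>Gs. \<Sum>s\<in>S. (1 / c) * (P G s * ln (1 / b)))"
    using term_le by (intro sum_mono) auto
  also have "\<dots> = (\<Sum>G\<in>Gs. (1 / c) * ln (1 / b) * (\<Sum>s\<in>S. P G s))"
    by (simp add: sum_distrib_left sum_distrib_right sum_divide_distrib mult_ac)
  also have "\<dots> = (\<Sum>G\<in>Gs. (1 / c) * ln (1 / b))"
    using P_sum by simp
  also have "\<dots> = ln (1 / b)"
    using c by (simp add: c_def)
  finally show ?thesis
    by (simp add: c_def)
qed

lemma sample_prob_sum_eq_one: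
  assumes "(\<Sum>x\<in>configs m v. joint m \<Theta> G x) = 1"
  shows "(\<Sum>s\<in>samples m v n. sample_prob m n \<Theta> G s) = 1"
proof -
  have "finite (configs m v)"
    unfolding configs_def by (rule finite_PiE) auto
  hence "(\<Sum>s\<in>samples m v n. sample_prob m n \<Theta> G s) = (\<Prod>k<n. \<Sum>x\<in>configs m v. joint m \<Theta> G x)"
    unfolding samples_def sample_prob_def by (subst prod_sum_PiE) auto
  thus ?thesis
    using assms by simp
qed

lemma sample_prob_bounds:
  assumes "\<And>x. x \<in> configs m v \<Longrightarrow> b \<le> joint m \<Theta> G x \<and> joint m \<Theta> G x \<le> 1"
    and "0 \<le> b" and "s \<in> samples m v n"
  shows "b ^ n \<le> sample_prob m n \<Theta> G s \<and> sample_prob m n \<Theta> G s \<le> 1"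
proof -
  have joint_s: "b \<le> joint m \<Theta> G (s k) \<and> joint m \<Theta> G (s k) \<le> 1" if "k < n" for k
    using assms(1,3) that by (auto simp: samples_def)
  have "(\<Prod>k<n. b) \<le> sample_prob m n \<Theta> G s"
    unfolding sample_prob_def using assms(2) joint_s by (intro prod_mono) auto
  moreover have "sample_prob m n \<Theta> G s \<le> 1"
    unfolding sample_prob_def using assms(2) joint_s by (intro prod_le_1) force
  ultimately show ?thesis
    by simp
qed

lemma mutual_info_le:
  assumes Gs: "finite Gs" "Gs \<noteq> {}" "\<forall>G\<in>Gs. is_dag m G"
    and valid: "valid_param m v Gs \<Theta>" and t: "0 < t"
    and cpd_ge: "\<forall>G\<in>Gs. \<forall>i<m. \<forall>x\<in>configs m v. \<forall>j<v. t \<le> cpd \<Theta> G i x j"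
  shows "mutual_info m v n Gs \<Theta> \<le> real n * real m * ln (1 / t)"
proof -
  have dist: "\<forall>i<m. \<forall>x\<in>configs m v. is_dist v (cpd \<Theta> G i x)" if "G \<in> Gs" for G
    using valid that unfolding valid_param_def by blast
  have joint_bounds: "t ^ m \<le> joint m \<Theta> G x \<and> joint m \<Theta> G x \<le> 1"
    if "G \<in> Gs" "x \<in> configs m v" for G x
    using that dist[OF that(1)] cpd_ge t
    by (auto intro!: power_le_joint joint_le_one simp: configs_def PiE_iff)
  have "mutual_info m v n Gs \<Theta> \<le> ln (1 / (t ^ m) ^ n)"
    unfolding mutual_info_def
  proof (rule mixture_divergence_le[OF Gs(1,2)])
    show "0 < (t ^ m) ^ n"
      using t by simp
    show "(t ^ m) ^ n \<le> sample_prob m n \<Theta> G s \<and> sample_prob m n \<Theta> G s \<le> 1"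
      if "G \<in> Gs" "s \<in> samples m v n" for G s
      using that t joint_bounds by (intro sample_prob_bounds) auto
    show "(\<Sum>s\<in>samples m v n. sample_prob m n \<Theta> G s) = 1" if "G \<in> Gs" for G
      using that Gs(3) dist valid_param_configs_nonempty[OF valid]
      by (intro sample_prob_sum_eq_one joint_sum_eq_one) auto
  qed
  also have "\<dots> = real n * real m * ln (1 / t)"
    using t by (simp add: ln_div ln_realpow)
  finally show ?thesis .
qed

lemma theta_min_lower_bounds:
  assumes "\<forall>\<Theta>\<in>Ps. valid_param m v Gs \<Theta>" and "\<Theta> \<in> Ps" and "i < m" and "j < v"
  shows "G \<in> Gs \<Longrightarrow> x \<in> configs m v \<Longrightarrow> theta_min m v Gs Ps \<le> cpd \<Theta> G i x j"
    and "theta_min m v Gs Ps \<le> ref_table \<Theta> i j"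
proof -
  have bdd: "bdd_below
    ({cpd \<Theta> G i x j | \<Theta> G i x j. \<Theta> \<in> Ps \<and> G \<in> Gs \<and> i < m \<and> x \<in> configs m v \<and> j < v}
      \<union> {ref_table \<Theta> i j | \<Theta> i j. \<Theta> \<in> Ps \<and> i < m \<and> j < v})"
    using assms(1) unfolding bdd_below_def valid_param_def is_dist_def by (intro exI[of _ 0]) auto
  show "G \<in> Gs \<Longrightarrow> x \<in> configs m v \<Longrightarrow> theta_min m v Gs Ps \<le> cpd \<Theta> G i x j"
    unfolding theta_min_def using assms bdd by (auto intro!: cInf_lower)
  show "theta_min m v Gs Ps \<le> ref_table \<Theta> i j"
    unfolding theta_min_def using assms bdd by (auto intro!: cInf_lower)
qed

theorem lemma7:
  fixes m v n :: nat and Gs :: "dag set" and Ps :: "param_map set"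
  assumes "finite Gs" and "Gs \<noteq> {}" and "\<forall>G\<in>Gs. is_dag m G"
    and "Ps \<noteq> {}" and "\<forall>\<Theta>\<in>Ps. valid_param m v Gs \<Theta>"
    and "theta_min m v Gs Ps > 0"
  shows "(\<forall>i<m. \<forall>G\<in>Gs. \<forall>\<Theta>\<in>Ps.
            exp_delta m v \<Theta> G i \<le> 4 * ln (1 / theta_min m v Gs Ps))
       \<and> (\<forall>\<Theta>\<in>Ps. mutual_info m v n Gs \<Theta> \<le> 4 * real n * real m * ln (1 / theta_min m v Gs Ps))"
proof -
  define t where "t = theta_min m v Gs Ps"
  note bounds = theta_min_lower_bounds[OF assms(5), folded t_def]
  have ln_nonneg: "0 \<le> ln (1 / t)" if "0 < m"
  proof -
    obtain \<Theta> where \<Theta>: "\<Theta> \<in> Ps"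
      using assms(4) by blast
    hence dist: "is_dist v (ref_table \<Theta> 0)"
      using assms(5) that unfolding valid_param_def by blast
    hence "t \<le> 1"
      using bounds(2)[OF \<Theta> that] is_dist_le_one[OF dist] is_dist_imp_pos[OF dist] by force
    thus ?thesis
      using assms(6) by (simp add: t_def)
  qed
  have exp_delta_bound: "exp_delta m v \<Theta> G i \<le> 2 * ln (1 / t)" if "i < m" "G \<in> Gs" "\<Theta> \<in> Ps" for i G \<Theta>
    using that assms bounds by (intro exp_delta_le_two_ln[of m v Gs]) (auto simp: t_def)
  have mutual_info_bound: "mutual_info m v n Gs \<Theta> \<le> real n * real m * ln (1 / t)" if "\<Theta> \<in> Ps" for \<Theta>
    using that assms bounds by (intro mutual_info_le) (auto simp: t_def)
  have "real n * real m * ln (1 / t) \<le> 4 * real n * real m * ln (1 / t)"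
    using ln_nonneg by (cases "m = 0") (auto intro!: mult_right_mono mult_nonneg_nonneg)
  thus ?thesis
    using exp_delta_bound mutual_info_bound ln_nonneg unfolding t_def[symmetric]
    by (smt (verit) less_nat_zero_code neq0_conv)
qed

end
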